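(* Let $\mathbb{K}$ be a field and $f=a_0(x)+a_1(x)y+\cdots+a_n(x)y^n\in\mathbb{K}[x,y]$ with $n\geq 2$, $a_0,\ldots,a_n\in\mathbb{K}[x]$, $a_0a_n\neq 0$, such that $f$ has no nonconstant factor in $\mathbb{K}[x]$ and $\deg a_0>\max\{\deg a_1,\ldots,\deg a_n\}$. If $a_0$ is irreducible in $\mathbb{K}[x]$, or if $a_n$ is irreducible in $\mathbb{K}[x]$ and $\deg a_n\geq\deg a_0-\deg q$ with $q\in\mathbb{K}[x]$ an irreducible factor of $a_0$ of smallest degree, then $f$ is irreducible over $\mathbb{K}[x]$.
   Context: $f$ is regarded as a polynomial in $y$ with coefficients in $\mathbb{K}[x]$; irreducibility over $\mathbb{K}[x]$ means irreducibility in $\mathbb{K}[x][y]$. *)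

theory Defs
  imports "HOL-Computational_Algebra.Polynomial_Factorial"
begin

end

theory Submission imports Defs begin

text \<open>Let \<open>D(p)\<close> be the largest \<open>x\<close>-degree of a coefficient of \<open>p = \<Sum> a\<^sub>i y^i\<close>
  in \<open>K[x][y]\<close>, and \<open>T(p) \<in> K[y]\<close> the polynomial whose \<open>i\<close>-th coefficient is the
  coefficient of \<open>x^D(p)\<close> in \<open>a\<^sub>i\<close>. Like a leading coefficient, \<open>T\<close> is multiplicative.
  The degree hypothesis says that \<open>T(f)\<close> is a constant, so in a factorisation
  \<open>f = g h\<close> both \<open>T(g)\<close> and \<open>T(h)\<close> are constants, i.e. \<open>g\<close> and \<open>h\<close> inherit the
  hypothesis. Since \<open>f\<close> has no factor in \<open>K[x]\<close>, a proper factorisation has \<open>g, h\<close>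
  of positive \<open>y\<close>-degree, hence \<open>deg lc(g) < deg g\<^sub>0\<close> and \<open>deg lc(h) < deg h\<^sub>0\<close>.
  Then \<open>a\<^sub>0 = g\<^sub>0 h\<^sub>0\<close> is reducible, and if \<open>a\<^sub>n = lc(g) lc(h)\<close> is irreducible,
  say with \<open>lc(g)\<close> constant, then \<open>deg a\<^sub>n < deg h\<^sub>0\<close> and \<open>deg q \<le> deg g\<^sub>0\<close>, so
  \<open>deg a\<^sub>n + deg q < deg a\<^sub>0\<close>.\<close>

definition x_degree :: "'a::zero poly poly \<Rightarrow> nat" where
  "x_degree p = Max ((\<lambda>i. degree (coeff p i)) ` {..degree p})"

definition x_coeff :: "'a::zero poly poly \<Rightarrow> nat \<Rightarrow> 'a poly" where
  "x_coeff p d = map_poly (\<lambda>a. coeff a d) p"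

definition coeff_0_dominates :: "'a::zero poly poly \<Rightarrow> bool" where
  "coeff_0_dominates p \<longleftrightarrow> (\<forall>i\<in>{1..degree p}. degree (coeff p i) < degree (coeff p 0))"

lemma coeff_x_coeff [simp]: "coeff (x_coeff p d) i = coeff (coeff p i) d"
  by (simp add: x_coeff_def coeff_map_poly)

lemma degree_coeff_le_x_degree: "degree (coeff p i) \<le> x_degree p"
  by (cases "i \<le> degree p") (auto simp: x_degree_def coeff_eq_0)

lemma x_coeff_x_degree_nonzero:
  assumes "p \<noteq> 0"
  shows "x_coeff p (x_degree p) \<noteq> 0"
proof -
  have "x_degree p \<in> (\<lambda>i. degree (coeff p i)) ` {..degree p}"
    unfolding x_degree_def by (rule Max_in) auto
  then obtain i where deg_i: "degree (coeff p i) = x_degree p" by auto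
  obtain k where "coeff p k \<noteq> 0" and deg_k: "degree (coeff p k) = x_degree p"
  proof (cases "coeff p i = 0")
    case True
    then have "degree (lead_coeff p) = x_degree p"
      using deg_i degree_coeff_le_x_degree[of p "degree p"] by simp
    with assms show ?thesis by (intro that[of "degree p"]) simp_all
  qed (use deg_i in blast)
  then have "coeff (x_coeff p (x_degree p)) k \<noteq> 0"
    by (metis coeff_x_coeff leading_coeff_0_iff)
  then show ?thesis by (metis coeff_0)
qed

lemma coeff_mult_at_degree_bounds:
  fixes a b :: "'a::idom poly"
  assumes "degree a \<le> m" "degree b \<le> n"
  shows "coeff (a * b) (m + n) = coeff a m * coeff b n"
proof (cases "degree a = m \<and> degree b = n")
  case True
  then show ?thesis using coeff_mult_degree_sum by blast
next
  case False
  then have "coeff a m * coeff b n = 0"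
    using assms by (auto simp: coeff_eq_0)
  moreover have "degree (a * b) < m + n \<or> a * b = 0"
    using False assms degree_mult_eq[of a b] by fastforce
  ultimately show ?thesis by (auto simp: coeff_eq_0)
qed

lemma x_coeff_mult:
  fixes g h :: "'a::idom poly poly"
  assumes "\<And>i. degree (coeff g i) \<le> m" "\<And>i. degree (coeff h i) \<le> n"
  shows "x_coeff (g * h) (m + n) = x_coeff g m * x_coeff h n"
proof (rule poly_eqI)
  fix k
  have "coeff (x_coeff (g * h) (m + n)) k
      = (\<Sum>i\<le>k. coeff (coeff g i * coeff h (k - i)) (m + n))"
    by (simp add: coeff_mult coeff_sum)
  also have "\<dots> = (\<Sum>i\<le>k. coeff (coeff g i) m * coeff (coeff h (k - i)) n)"
    using assms by (simp add: coeff_mult_at_degree_bounds)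
  also have "\<dots> = coeff (x_coeff g m * x_coeff h n) k"
    by (simp add: coeff_mult)
  finally show "coeff (x_coeff (g * h) (m + n)) k = coeff (x_coeff g m * x_coeff h n) k" .
qed

lemma degree_x_coeff_eq_0_if_coeff_0_dominates:
  assumes "coeff_0_dominates p" "degree (coeff p 0) \<le> d"
  shows "degree (x_coeff p d) = 0"
proof -
  have "coeff (coeff p i) d = 0" if "i > 0" for i
  proof (cases "i \<le> degree p")
    case True
    with that have "degree (coeff p i) < degree (coeff p 0)"
      using assms(1) by (simp add: coeff_0_dominates_def)
    with assms(2) have "degree (coeff p i) < d" by linarith
    then show ?thesis by (simp add: coeff_eq_0)
  qed (simp add: coeff_eq_0)
  then show ?thesis by (intro degree_le[of 0, simplified le_zero_eq]) auto
qed

lemma coeff_0_dominates_if_degree_x_coeff_eq_0: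
  assumes "p \<noteq> 0" and const: "degree (x_coeff p (x_degree p)) = 0"
  shows "coeff_0_dominates p"
  unfolding coeff_0_dominates_def
proof
  fix j assume j: "j \<in> {1..degree p}"
  let ?D = "x_degree p"
  have top_j: "coeff (coeff p j) ?D = 0"
    using j const coeff_eq_0[of "x_coeff p ?D" j] by simp
  have "?D > 0"
  proof (rule ccontr)
    assume "\<not> ?D > 0"
    then have "degree (lead_coeff p) = 0"
      using degree_coeff_le_x_degree[of p "degree p"] by simp
    then have "coeff (x_coeff p ?D) (degree p) \<noteq> 0"
      using \<open>\<not> ?D > 0\<close> assms(1) by (metis coeff_x_coeff gr0I leading_coeff_0_iff)
    then show False using j const coeff_eq_0[of "x_coeff p ?D" "degree p"] by auto
  qed
  then have "degree (coeff p j) < ?D"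
    using top_j degree_coeff_le_x_degree[of p j]
    by (metis le_neq_implies_less leading_coeff_0_iff degree_0)
  moreover have "coeff (coeff p 0) ?D \<noteq> 0"
    using x_coeff_x_degree_nonzero[OF assms(1)] const by (metis degree_0_id coeff_x_coeff pCons_0_0)
  then have "?D \<le> degree (coeff p 0)" by (rule le_degree)
  ultimately show "degree (coeff p j) < degree (coeff p 0)" by simp
qed

lemma coeff_0_dominates_factor:
  fixes g h :: "'a::idom poly poly"
  assumes "coeff_0_dominates (g * h)" "g \<noteq> 0" "h \<noteq> 0"
  shows "coeff_0_dominates g"
proof -
  let ?m = "x_degree g" and ?n = "x_degree h"
  have "degree (coeff (g * h) 0) \<le> ?m + ?n"
    using degree_mult_le[of "coeff g 0" "coeff h 0"]
      degree_coeff_le_x_degree[of g 0] degree_coeff_le_x_degree[of h 0]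
    by (simp add: coeff_mult)
  then have "degree (x_coeff (g * h) (?m + ?n)) = 0"
    by (rule degree_x_coeff_eq_0_if_coeff_0_dominates[OF assms(1)])
  then have "degree (x_coeff g ?m) + degree (x_coeff h ?n) = 0"
    by (simp add: x_coeff_mult degree_coeff_le_x_degree degree_mult_eq
        x_coeff_x_degree_nonzero assms(2,3))
  then show ?thesis
    using assms(2) by (intro coeff_0_dominates_if_degree_x_coeff_eq_0) auto
qed

lemma degree_pos_if_no_const_factor:
  fixes f g :: "'a::field poly poly"
  assumes "\<forall>c. [:c:] dvd f \<longrightarrow> degree c = 0" "g dvd f" "g \<noteq> 0" "\<not> is_unit g"
  shows "degree g > 0"
proof (rule ccontr)
  assume "\<not> degree g > 0"
  then obtain c where g: "g = [:c:]" by (auto elim: degree_eq_zeroE)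
  with assms(1,2) have "degree c = 0" by blast
  with g assms(3) have "is_unit c" by (simp add: is_unit_iff_degree)
  with g assms(4) show False by (simp add: is_unit_const_poly_iff)
qed

lemma degree_lead_coeff_less_coeff_0_if_factor:
  fixes g h :: "'a::field poly poly"
  assumes "coeff_0_dominates (g * h)" "\<forall>c. [:c:] dvd g * h \<longrightarrow> degree c = 0"
    and "g * h \<noteq> 0" "\<not> is_unit g"
  shows "degree (lead_coeff g) < degree (coeff g 0)"
proof -
  have "g \<noteq> 0" "h \<noteq> 0" using assms(3) by auto
  then have "coeff_0_dominates g"
    using assms(1) by (rule coeff_0_dominates_factor[rotated])
  moreover have "degree g > 0"
    using assms(2,4) \<open>g \<noteq> 0\<close> by (auto intro: degree_pos_if_no_const_factor)
  ultimately show ?thesis by (simp add: coeff_0_dominates_def)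
qed

lemma ex_irreducible_dvd:
  fixes p :: "'a::field poly"
  assumes "degree p > 0"
  shows "\<exists>r. irreducible r \<and> r dvd p"
  using assms
proof (induction "degree p" arbitrary: p rule: less_induct)
  case less
  have "p \<noteq> 0" using less.prems by auto
  show ?case
  proof (cases "irreducible p")
    case False
    moreover have "\<not> is_unit p" using is_unit_iff_degree[OF \<open>p \<noteq> 0\<close>] less.prems by simp
    ultimately obtain s t where st: "p = s * t" "\<not> is_unit s" "\<not> is_unit t"
      using \<open>p \<noteq> 0\<close> unfolding irreducible_def by blast
    then have "s \<noteq> 0" "t \<noteq> 0" using \<open>p \<noteq> 0\<close> by auto
    then have "degree s > 0" "degree t > 0" using st(2,3) is_unit_iff_degree by auto
    then have "degree s < degree p" using st(1) \<open>s \<noteq> 0\<close> \<open>t \<noteq> 0\<close> by (simp add: degree_mult_eq)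
    then obtain r where "irreducible r" "r dvd s" using less.hyps \<open>degree s > 0\<close> by blast
    with st(1) show ?thesis by (meson dvd_mult2)
  qed (use dvd_refl in blast)
qed

lemma min_irreducible_factor_degree_le:
  fixes a p q :: "'a::field poly"
  assumes min: "\<forall>r. irreducible r \<and> r dvd a \<longrightarrow> degree q \<le> degree r"
    and "p dvd a" "degree p > 0"
  shows "degree q \<le> degree p"
proof -
  obtain r where "irreducible r" "r dvd p"
    using ex_irreducible_dvd assms(3) by blast
  then have "degree q \<le> degree r"
    using min assms(2) dvd_trans by blast
  also have "degree r \<le> degree p"
    using \<open>r dvd p\<close> assms(3) by (auto intro: dvd_imp_degree_le)
  finally show ?thesis .
qed

lemma irreducible_mult_degree_eq_0:
  fixes u v :: "'a::field poly"
  assumes "irreducible (u * v)"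
  shows "degree u = 0 \<or> degree v = 0"
proof -
  have "u \<noteq> 0" "v \<noteq> 0" using assms by auto
  moreover have "is_unit u \<or> is_unit v"
    using irreducible_multD[OF assms] by blast
  ultimately show ?thesis by (auto simp: is_unit_iff_degree)
qed

lemma degree_irreducible_add_min_factor_less:
  fixes b c u v q :: "'a::field poly"
  assumes "irreducible (u * v)" "degree u < degree b" "degree v < degree c"
    and min: "\<forall>r. irreducible r \<and> r dvd b * c \<longrightarrow> degree q \<le> degree r"
  shows "degree (u * v) + degree q < degree (b * c)"
proof -
  have "b \<noteq> 0" "c \<noteq> 0" "u \<noteq> 0" "v \<noteq> 0"
    using assms(1-3) by auto
  then have deg_bc: "degree (b * c) = degree b + degree c"
    and deg_uv: "degree (u * v) = degree u + degree v"
    by (simp_all add: degree_mult_eq)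
  have "degree q \<le> degree b"
    using min_irreducible_factor_degree_le[OF min, of b] assms(2) by simp
  moreover have "degree q \<le> degree c"
    using min_irreducible_factor_degree_le[OF min, of c] assms(3) by simp
  moreover have "degree u = 0 \<or> degree v = 0"
    using assms(1) by (rule irreducible_mult_degree_eq_0)
  ultimately show ?thesis
    using assms(2,3) deg_bc deg_uv by linarith
qed

theorem corollary3:
  fixes f :: "'a::field poly poly" and n :: nat
  assumes n_def: "n = degree f"
    and n_ge: "n \<ge> 2"
    and a0an: "coeff f 0 * coeff f n \<noteq> 0"
    and no_const_factor: "\<forall>c :: 'a poly. [:c:] dvd f \<longrightarrow> degree c = 0"
    and deg_dom: "\<forall>i\<in>{1..n}. degree (coeff f i) < degree (coeff f 0)"
    and cases: "irreducible (coeff f 0) \<or>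
       (irreducible (coeff f n) \<and>
        (\<exists>q :: 'a poly. irreducible q \<and> q dvd coeff f 0 \<and>
           (\<forall>r. irreducible r \<and> r dvd coeff f 0 \<longrightarrow> degree q \<le> degree r) \<and>
           degree (coeff f n) + degree q \<ge> degree (coeff f 0)))"
  shows "irreducible f"
proof (rule irreducibleI)
  show f0: "f \<noteq> 0" using a0an by auto
  show "\<not> is_unit f" using f0 n_def n_ge dvd_imp_degree_le[of f 1] by auto
  have dom: "coeff_0_dominates f"
    using deg_dom n_def by (simp add: coeff_0_dominates_def)
  fix g h assume fgh: "f = g * h"
  show "is_unit g \<or> is_unit h"
  proof (rule ccontr)
    assume "\<not> (is_unit g \<or> is_unit h)"
    then have lead_g: "degree (lead_coeff g) < degree (coeff g 0)"
      and lead_h: "degree (lead_coeff h) < degree (coeff h 0)"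
      using degree_lead_coeff_less_coeff_0_if_factor[of g h]
        degree_lead_coeff_less_coeff_0_if_factor[of h g] dom no_const_factor f0 fgh
      by (simp_all add: mult.commute)
    have a0: "coeff f 0 = coeff g 0 * coeff h 0" using fgh by (simp add: coeff_mult)
    have an: "coeff f n = lead_coeff g * lead_coeff h" using fgh n_def by (simp add: lead_coeff_mult)
    have "\<not> irreducible (coeff f 0)"
      using irreducible_mult_degree_eq_0[of "coeff g 0" "coeff h 0"] lead_g lead_h a0 by auto
    moreover have "degree (coeff f n) + degree q < degree (coeff f 0)"
      if "irreducible (coeff f n)" "\<forall>r. irreducible r \<and> r dvd coeff f 0 \<longrightarrow> degree q \<le> degree r"
      for q :: "'a poly"
      using degree_irreducible_add_min_factor_less[OF _ lead_g lead_h, of q] that a0 an by simp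
    ultimately show False
      using cases by (meson leD)
  qed
qed

end
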